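(* Let $G$ be a second countable locally compact Hausdorff groupoid with a fixed left Haar system $\lambda=\{\lambda^u\}_{u\in G^0}$, and let $(\Phi,\Psi)$ be a complementary pair of $N$-functions with $\Phi\in\Delta_2$. If $\sup_{u\in G^0}\lambda^u(G)<\infty$, then $I_0^\Phi(G,\lambda)\subseteq I(G,\lambda)$ and $E_0^\Phi\subseteq E^1$. In particular, this holds if $G$ is compact.
   Context: $G^0$ is the unit space, $r(x)=xx^{-1}$, $d(x)=x^{-1}x$, $G^u=r^{-1}(u)$; the left Haar system consists of positive Radon measures $\lambda^u$ with support $G^u$, $u\mapsto\int f d\lambda^u$ continuous for $f\in C_c(G)$, and $\int f(xy)d\lambda^{d(x)}(y)=\int f(y)d\lambda^{r(x)}(y)$. An $N$-function is a continuous even convex $\Phi:\mathbb R\to[0,\infty)$ with $\Phi(x)=0$ iff $x=0$, $\Phi(x)/x\to0$ as $x\to0$, $\to\infty$ as $x\to\infty$; complementary function $\Psi(y)=\sup_{x\ge0}(x|y|-\Phi(x))$. $\Phi\in\Delta_2$: there is $k>0$ with $\Phi(2x)\le k\Phi(x)$ for all $x\ge0$ ($G$ non-compact), resp. for $x\ge x_0$, some $x_0>0$ ($G$ compact). $L^\Phi(G^u)$: measurable $f$ on $G^u$ with $\int\Phi(\alpha|f|)d\lambda^u<\infty$ for some $\alpha>0$, gauge norm $\|f\|^0_\Phi=\inf\{k>0:\int\Phi(|f|/k)d\lambda^u\le1\}$. For $f\in C_c(G)$, $f^u=f|_{G^u}$. $I_0^\Phi(G,\lambda)$ is the space of bounded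 sections $\xi=(\xi^u)_{u\in G^0}$, $\xi^u\in L^\Phi(G^u)$, $\sup_u\|\xi^u\|^0_\Phi<\infty$ (not necessarily continuous); $I(G,\lambda)$ is the space of sections with $\xi^u\in L^1(G^u,\lambda^u)$ and $\sup_u\|\xi^u\|_1<\infty$. $E_0^\Phi$ is the space of $\xi\in I_0^\Phi(G,\lambda)$ which are locally close to $C_c(G)$ (for each $u_0$, $\varepsilon>0$ there are $f\in C_c(G)$ and a neighbourhood $V$ of $u_0$ with $\|\xi^v-f^v\|^0_\Phi<\varepsilon$ on $V$) and with $u\mapsto\|\xi^u\|^0_\Phi$ vanishing at infinity; $E^1$ is defined analogously with the $L^1(\lambda^u)$-norms in place of $\|\cdot\|^0_\Phi$. *)

theory Defs
  imports "HOL-Analysis.Analysis"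
begin

text \<open>The groupoid is the whole type 'g; G2 is the set of composable pairs,
  gm the (partial, here totalised) multiplication and gi the inversion.\<close>

definition groupoid :: "('g \<times> 'g) set \<Rightarrow> ('g \<Rightarrow> 'g \<Rightarrow> 'g) \<Rightarrow> ('g \<Rightarrow> 'g) \<Rightarrow> bool" where
  "groupoid G2 gm gi \<longleftrightarrow>
     (\<forall>x y z. (x, y) \<in> G2 \<and> (y, z) \<in> G2 \<longrightarrow>
        (gm x y, z) \<in> G2 \<and> (x, gm y z) \<in> G2 \<and> gm (gm x y) z = gm x (gm y z)) \<and>
     (\<forall>x. gi (gi x) = x) \<and>
     (\<forall>x. (gi x, x) \<in> G2) \<and>
     (\<forall>x y. (x, y) \<in> G2 \<longrightarrow> gm (gi x) (gm x y) = y \<and> gm (gm x y) (gi y) = x)"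

definition top_groupoid :: "('g::topological_space \<times> 'g) set \<Rightarrow> ('g \<Rightarrow> 'g \<Rightarrow> 'g) \<Rightarrow> ('g \<Rightarrow> 'g) \<Rightarrow> bool" where
  "top_groupoid G2 gm gi \<longleftrightarrow>
     groupoid G2 gm gi \<and>
     continuous_on G2 (\<lambda>(x, y). gm x y) \<and>
     continuous_on UNIV gi"

definition grp_r :: "('g \<Rightarrow> 'g \<Rightarrow> 'g) \<Rightarrow> ('g \<Rightarrow> 'g) \<Rightarrow> 'g \<Rightarrow> 'g" where
  "grp_r gm gi x = gm x (gi x)"

definition grp_d :: "('g \<Rightarrow> 'g \<Rightarrow> 'g) \<Rightarrow> ('g \<Rightarrow> 'g) \<Rightarrow> 'g \<Rightarrow> 'g" where
  "grp_d gm gi x = gm (gi x) x"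

definition unit_space :: "('g \<Rightarrow> 'g \<Rightarrow> 'g) \<Rightarrow> ('g \<Rightarrow> 'g) \<Rightarrow> 'g set" where
  "unit_space gm gi = range (grp_r gm gi)"

definition Cc :: "('g::topological_space \<Rightarrow> real) \<Rightarrow> bool" where
  "Cc f \<longleftrightarrow> continuous_on UNIV f \<and> compact (closure {x. f x \<noteq> 0})"

definition msupport :: "'g::topological_space measure \<Rightarrow> 'g set" where
  "msupport M = {x. \<forall>U. open U \<longrightarrow> x \<in> U \<longrightarrow> emeasure M U \<noteq> 0}"

definition left_haar_system ::
  "('g::topological_space \<times> 'g) set \<Rightarrow> ('g \<Rightarrow> 'g \<Rightarrow> 'g) \<Rightarrow> ('g \<Rightarrow> 'g) \<Rightarrow> ('g \<Rightarrow> 'g measure) \<Rightarrow> bool" where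
  "left_haar_system G2 gm gi lam \<longleftrightarrow>
     (\<forall>u\<in>unit_space gm gi.
        sets (lam u) = sets borel \<and>
        (\<forall>K. compact K \<longrightarrow> emeasure (lam u) K < \<infinity>) \<and>
        msupport (lam u) = {x. grp_r gm gi x = u}) \<and>
     (\<forall>f. Cc f \<longrightarrow> continuous_on (unit_space gm gi) (\<lambda>u. \<integral>x. f x \<partial>lam u)) \<and>
     (\<forall>x f. Cc f \<longrightarrow>
        (\<integral>y. f (gm x y) \<partial>lam (grp_d gm gi x)) = (\<integral>y. f y \<partial>lam (grp_r gm gi x)))"

definition N_function :: "(real \<Rightarrow> real) \<Rightarrow> bool" where
  "N_function \<Phi> \<longleftrightarrow>
     continuous_on UNIV \<Phi> \<and> (\<forall>x. \<Phi> (- x) = \<Phi> x) \<and> convex_on UNIV \<Phi> \<and>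
     (\<forall>x. \<Phi> x \<ge> 0) \<and> (\<forall>x. \<Phi> x = 0 \<longleftrightarrow> x = 0) \<and>
     ((\<lambda>x. \<Phi> x / x) \<longlongrightarrow> 0) (at 0) \<and>
     filterlim (\<lambda>x. \<Phi> x / x) at_top at_top"

definition complementary_fun :: "(real \<Rightarrow> real) \<Rightarrow> real \<Rightarrow> real" where
  "complementary_fun \<Phi> y = (SUP x\<in>{0..}. x * \<bar>y\<bar> - \<Phi> x)"

definition Delta2 :: "bool \<Rightarrow> (real \<Rightarrow> real) \<Rightarrow> bool" where
  "Delta2 is_compact \<Phi> \<longleftrightarrow>
     (if is_compact
      then (\<exists>x0>0. \<exists>k>0. \<forall>x\<ge>x0. \<Phi> (2 * x) \<le> k * \<Phi> x)
      else (\<exists>k>0. \<forall>x\<ge>0. \<Phi> (2 * x) \<le> k * \<Phi> x))"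

definition fibre_measure :: "('g \<Rightarrow> 'g measure) \<Rightarrow> ('g \<Rightarrow> 'g) \<Rightarrow> 'g \<Rightarrow> 'g measure" where
  "fibre_measure lam r u = restrict_space (lam u) {x. r x = u}"

definition orlicz_space :: "(real \<Rightarrow> real) \<Rightarrow> 'a measure \<Rightarrow> ('a \<Rightarrow> real) set" where
  "orlicz_space \<Phi> M = {f. f \<in> borel_measurable M \<and>
      (\<exists>\<alpha>>0. (\<integral>\<^sup>+x. ennreal (\<Phi> (\<alpha> * \<bar>f x\<bar>)) \<partial>M) < \<infinity>)}"

definition gauge_norm :: "(real \<Rightarrow> real) \<Rightarrow> 'a measure \<Rightarrow> ('a \<Rightarrow> real) \<Rightarrow> real" where
  "gauge_norm \<Phi> M f = Inf {k. k > 0 \<and> (\<integral>\<^sup>+x. ennreal (\<Phi> (\<bar>f x\<bar> / k)) \<partial>M) \<le> 1}"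

definition L1_norm :: "'a measure \<Rightarrow> ('a \<Rightarrow> real) \<Rightarrow> real" where
  "L1_norm M f = (\<integral>x. \<bar>f x\<bar> \<partial>M)"

text \<open>A section \<open>\<xi>\<close> assigns to each unit u a function \<open>\<xi> u\<close> on the fibre \<open>G^u\<close>
  (values off \<open>G^u\<close> are irrelevant: everything is computed on the fibre measure).\<close>

definition I0_Phi :: "(real \<Rightarrow> real) \<Rightarrow> ('g \<Rightarrow> 'g \<Rightarrow> 'g) \<Rightarrow> ('g \<Rightarrow> 'g) \<Rightarrow> ('g \<Rightarrow> 'g measure)
    \<Rightarrow> ('g \<Rightarrow> 'g \<Rightarrow> real) set" where
  "I0_Phi \<Phi> gm gi lam = {\<xi>.
     (\<forall>u\<in>unit_space gm gi. \<xi> u \<in> orlicz_space \<Phi> (fibre_measure lam (grp_r gm gi) u)) \<and>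
     (\<exists>C. \<forall>u\<in>unit_space gm gi. gauge_norm \<Phi> (fibre_measure lam (grp_r gm gi) u) (\<xi> u) \<le> C)}"

definition I1 :: "('g \<Rightarrow> 'g \<Rightarrow> 'g) \<Rightarrow> ('g \<Rightarrow> 'g) \<Rightarrow> ('g \<Rightarrow> 'g measure) \<Rightarrow> ('g \<Rightarrow> 'g \<Rightarrow> real) set" where
  "I1 gm gi lam = {\<xi>.
     (\<forall>u\<in>unit_space gm gi. integrable (fibre_measure lam (grp_r gm gi) u) (\<xi> u)) \<and>
     (\<exists>C. \<forall>u\<in>unit_space gm gi. L1_norm (fibre_measure lam (grp_r gm gi) u) (\<xi> u) \<le> C)}"

definition loc_close_vanishing ::
  "('g::topological_space \<Rightarrow> ('g \<Rightarrow> real) \<Rightarrow> real) \<Rightarrow> 'g set \<Rightarrow> ('g \<Rightarrow> 'g \<Rightarrow> real) \<Rightarrow> bool" where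
  "loc_close_vanishing N U \<xi> \<longleftrightarrow>
     (\<forall>u0\<in>U. \<forall>\<epsilon>>0. \<exists>f V. Cc f \<and> open V \<and> u0 \<in> V \<and>
         (\<forall>v\<in>V \<inter> U. N v (\<lambda>x. \<xi> v x - f x) < \<epsilon>)) \<and>
     (\<forall>\<epsilon>>0. \<exists>K. compact K \<and> K \<subseteq> U \<and> (\<forall>u\<in>U - K. N u (\<xi> u) < \<epsilon>))"

definition E0_Phi :: "(real \<Rightarrow> real) \<Rightarrow> ('g::topological_space \<Rightarrow> 'g \<Rightarrow> 'g) \<Rightarrow> ('g \<Rightarrow> 'g)
    \<Rightarrow> ('g \<Rightarrow> 'g measure) \<Rightarrow> ('g \<Rightarrow> 'g \<Rightarrow> real) set" where
  "E0_Phi \<Phi> gm gi lam = {\<xi>. \<xi> \<in> I0_Phi \<Phi> gm gi lam \<and>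
     loc_close_vanishing (\<lambda>u. gauge_norm \<Phi> (fibre_measure lam (grp_r gm gi) u))
        (unit_space gm gi) \<xi>}"

definition E1 :: "('g::topological_space \<Rightarrow> 'g \<Rightarrow> 'g) \<Rightarrow> ('g \<Rightarrow> 'g)
    \<Rightarrow> ('g \<Rightarrow> 'g measure) \<Rightarrow> ('g \<Rightarrow> 'g \<Rightarrow> real) set" where
  "E1 gm gi lam = {\<xi>. \<xi> \<in> I1 gm gi lam \<and>
     loc_close_vanishing (\<lambda>u. L1_norm (fibre_measure lam (grp_r gm gi) u))
        (unit_space gm gi) \<xi>}"

end

theory Submission
  imports Defs
begin

(* Since \<Phi>(t)/t \<rightarrow> \<infinity>, there is b with t \<le> \<Phi>(t) + b for t \<ge> 0. If the modular
   \<integral>\<Phi>(|h|/k) is at most 1 on a measure space of total mass at most C, integrating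
   |h| \<le> k \<Phi>(|h|/k) + k b gives \<parallel>h\<parallel>\<^sub>1 \<le> k (1 + b C); taking the infimum over k,
   \<parallel>h\<parallel>\<^sub>1 \<le> (1 + b C) \<parallel>h\<parallel>\<^sub>\<Phi>. With C = sup\<^sub>u \<lambda>\<^sup>u(G) this constant does not depend on
   the fibre, so bounded sections stay bounded and the \<epsilon>-conditions defining E\<^sub>0\<^sup>\<Phi>
   pass to E\<^sup>1 with \<epsilon>/(1 + b C). If G is compact, so is G\<^sup>0 = r(G), and
   u \<mapsto> \<lambda>\<^sup>u(G) = \<integral>1 d\<lambda>\<^sup>u is continuous on it, hence bounded. *)

lemma N_function_nonneg: "N_function \<Phi> \<Longrightarrow> \<Phi> x \<ge> 0"
  unfolding N_function_def by auto

lemma borel_measurable_N_function: "N_function \<Phi> \<Longrightarrow> \<Phi> \<in> borel_measurable borel"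
  unfolding N_function_def by (auto intro: borel_measurable_continuous_onI)

lemma N_function_scale_le:
  assumes "N_function \<Phi>" "0 \<le> s" "s \<le> 1"
  shows "\<Phi> (s * x) \<le> s * \<Phi> x"
proof -
  have "convex_on UNIV \<Phi>" "\<Phi> 0 = 0"
    using assms(1) unfolding N_function_def by auto
  then show ?thesis
    using convex_onD[of UNIV \<Phi> s 0 x] assms by simp
qed

lemma N_function_mono:
  assumes N: "N_function \<Phi>" and "0 \<le> x" "x \<le> y"
  shows "\<Phi> x \<le> \<Phi> y"
proof (cases "y = 0")
  case True
  then show ?thesis using assms by simp
next
  case False
  then have "y > 0" using assms by simp
  have "\<Phi> x = \<Phi> ((x / y) * y)" using \<open>y > 0\<close> by simp
  also have "\<dots> \<le> (x / y) * \<Phi> y"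
    using assms \<open>y > 0\<close> by (intro N_function_scale_le) auto
  also have "\<dots> \<le> 1 * \<Phi> y"
    using assms \<open>y > 0\<close> N_function_nonneg[OF N, of y] by (intro mult_right_mono) auto
  also have "\<dots> = \<Phi> y" by simp
  finally show ?thesis .
qed

lemma N_function_ge_linear:
  assumes "N_function \<Phi>"
  obtains b where "b \<ge> 0" "\<And>t. 0 \<le> t \<Longrightarrow> t \<le> \<Phi> t + b"
proof -
  have "filterlim (\<lambda>x. \<Phi> x / x) at_top at_top"
    using assms unfolding N_function_def by auto
  then have "eventually (\<lambda>x. 1 \<le> \<Phi> x / x) at_top"
    by (simp add: filterlim_at_top)
  then obtain N where N: "\<And>x. x \<ge> N \<Longrightarrow> 1 \<le> \<Phi> x / x"
    by (auto simp: eventually_at_top_linorder)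
  have "t \<le> \<Phi> t + max N 1" if "0 \<le> t" for t
  proof (cases "t \<ge> max N 1")
    case True
    then have "t > 0" "1 \<le> \<Phi> t / t" using N[of t] by auto
    then show ?thesis by (simp add: pos_le_divide_eq)
  next
    case False
    then show ?thesis using N_function_nonneg[OF assms, of t] by linarith
  qed
  then show ?thesis using that[of "max N 1"] by simp
qed

lemma orlicz_space_modular_le_one:
  assumes N: "N_function \<Phi>" and h: "h \<in> orlicz_space \<Phi> M"
  shows "\<exists>k>0. (\<integral>\<^sup>+x. ennreal (\<Phi> (\<bar>h x\<bar> / k)) \<partial>M) \<le> 1"
proof -
  obtain \<alpha> where hm: "h \<in> borel_measurable M" and "\<alpha> > 0"
    and fin: "(\<integral>\<^sup>+x. ennreal (\<Phi> (\<alpha> * \<bar>h x\<bar>)) \<partial>M) < \<infinity>"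
    using h unfolding orlicz_space_def by blast
  define r where "r = enn2real (\<integral>\<^sup>+x. ennreal (\<Phi> (\<alpha> * \<bar>h x\<bar>)) \<partial>M)"
  have r: "(\<integral>\<^sup>+x. ennreal (\<Phi> (\<alpha> * \<bar>h x\<bar>)) \<partial>M) = ennreal r" "r \<ge> 0"
    using fin by (auto simp: r_def)
  define s where "s = 1 / (r + 1)"
  have s: "0 < s" "s \<le> 1" "s * r \<le> 1" using r by (auto simp: s_def field_simps)
  define k where "k = 1 / (s * \<alpha>)"
  have k: "k > 0" "\<And>x. \<bar>h x\<bar> / k = s * (\<alpha> * \<bar>h x\<bar>)"
    using s \<open>\<alpha> > 0\<close> by (auto simp: k_def)
  have "(\<integral>\<^sup>+x. ennreal (\<Phi> (\<bar>h x\<bar> / k)) \<partial>M)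
      \<le> (\<integral>\<^sup>+x. ennreal s * ennreal (\<Phi> (\<alpha> * \<bar>h x\<bar>)) \<partial>M)"
    unfolding k(2) using N_function_scale_le[OF N] N_function_nonneg[OF N] s
    by (intro nn_integral_mono) (simp add: ennreal_mult[symmetric] ennreal_leI del: ennreal_mult)
  also have "\<dots> = ennreal (s * r)"
    using hm borel_measurable_N_function[OF N] r s by (simp add: nn_integral_cmult ennreal_mult)
  also have "\<dots> \<le> 1" using s by simp
  finally show ?thesis using k by blast
qed

lemma integrable_L1_bound_of_modular_le_one:
  assumes N: "N_function \<Phi>" and b: "b \<ge> 0" "\<And>t. 0 \<le> t \<Longrightarrow> t \<le> \<Phi> t + b"
    and M: "emeasure M (space M) \<le> ennreal C" "C \<ge> 0"
    and h: "h \<in> borel_measurable M" and "k > 0"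
    and modular: "(\<integral>\<^sup>+x. ennreal (\<Phi> (\<bar>h x\<bar> / k)) \<partial>M) \<le> 1"
  shows "integrable M h" and "L1_norm M h \<le> k * (1 + b * C)"
proof -
  have pointwise: "ennreal \<bar>h x\<bar> \<le> ennreal k * ennreal (\<Phi> (\<bar>h x\<bar> / k)) + ennreal (k * b)" for x
  proof -
    have "\<bar>h x\<bar> = k * (\<bar>h x\<bar> / k)" using \<open>k > 0\<close> by simp
    also have "\<dots> \<le> k * (\<Phi> (\<bar>h x\<bar> / k) + b)"
      using b(2)[of "\<bar>h x\<bar> / k"] \<open>k > 0\<close> by (intro mult_left_mono) auto
    finally show ?thesis
      using \<open>k > 0\<close> b N_function_nonneg[OF N]
      by (simp add: distrib_left ennreal_mult[symmetric] ennreal_plus[symmetric] ennreal_leI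
          del: ennreal_plus)
  qed
  have "(\<integral>\<^sup>+x. ennreal \<bar>h x\<bar> \<partial>M)
      \<le> (\<integral>\<^sup>+x. ennreal k * ennreal (\<Phi> (\<bar>h x\<bar> / k)) + ennreal (k * b) \<partial>M)"
    by (intro nn_integral_mono pointwise)
  also have "\<dots> = ennreal k * (\<integral>\<^sup>+x. ennreal (\<Phi> (\<bar>h x\<bar> / k)) \<partial>M)
                  + ennreal (k * b) * emeasure M (space M)"
    using h borel_measurable_N_function[OF N] by (simp add: nn_integral_add nn_integral_cmult)
  also have "\<dots> \<le> ennreal k * 1 + ennreal (k * b) * ennreal C"
    using modular M by (intro add_mono mult_left_mono) auto
  also have "\<dots> = ennreal (k * (1 + b * C))"
    using \<open>k > 0\<close> b M by (simp add: ennreal_mult[symmetric] ennreal_plus[symmetric] algebra_simps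
      del: ennreal_plus)
  finally have bound: "(\<integral>\<^sup>+x. ennreal \<bar>h x\<bar> \<partial>M) \<le> ennreal (k * (1 + b * C))" .
  then show "integrable M h"
    using h by (intro integrableI_bounded) (auto simp: top_unique less_top[symmetric])
  then have "(\<integral>\<^sup>+x. ennreal \<bar>h x\<bar> \<partial>M) = ennreal (L1_norm M h)"
    unfolding L1_norm_def by (intro nn_integral_eq_integral) auto
  with bound show "L1_norm M h \<le> k * (1 + b * C)"
    using \<open>k > 0\<close> b M by (simp add: ennreal_le_iff)
qed

lemma L1_norm_le_gauge_norm:
  assumes N: "N_function \<Phi>" and b: "b \<ge> 0" "\<And>t. 0 \<le> t \<Longrightarrow> t \<le> \<Phi> t + b"
    and M: "emeasure M (space M) \<le> ennreal C" "C \<ge> 0"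
    and h: "h \<in> orlicz_space \<Phi> M"
  shows "integrable M h" and "L1_norm M h \<le> (1 + b * C) * gauge_norm \<Phi> M h"
proof -
  let ?K = "{k. k > 0 \<and> (\<integral>\<^sup>+x. ennreal (\<Phi> (\<bar>h x\<bar> / k)) \<partial>M) \<le> 1}"
  have "?K \<noteq> {}" using orlicz_space_modular_le_one[OF N h] by auto
  have hm: "h \<in> borel_measurable M" using h unfolding orlicz_space_def by blast
  note bound = integrable_L1_bound_of_modular_le_one[OF N b M hm]
  show "integrable M h" using bound(1) \<open>?K \<noteq> {}\<close> by blast
  have "1 + b * C > 0" using b M by (simp add: add_pos_nonneg)
  then have "L1_norm M h / (1 + b * C) \<le> k" if "k \<in> ?K" for k
    using bound(2)[of k] that by (simp add: divide_le_eq mult.commute)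
  then have "L1_norm M h / (1 + b * C) \<le> gauge_norm \<Phi> M h"
    unfolding gauge_norm_def using \<open>?K \<noteq> {}\<close> by (intro cInf_greatest) auto
  then show "L1_norm M h \<le> (1 + b * C) * gauge_norm \<Phi> M h"
    using \<open>1 + b * C > 0\<close> by (simp add: divide_le_eq mult.commute)
qed

lemma orlicz_space_diff_bounded:
  assumes N: "N_function \<Phi>" and M: "emeasure M (space M) < \<infinity>"
    and g: "g \<in> orlicz_space \<Phi> M"
    and f: "f \<in> borel_measurable M" "\<And>x. \<bar>f x\<bar> \<le> B"
  shows "(\<lambda>x. g x - f x) \<in> orlicz_space \<Phi> M"
proof -
  obtain k where "k > 0" and modular: "(\<integral>\<^sup>+x. ennreal (\<Phi> (\<bar>g x\<bar> / k)) \<partial>M) \<le> 1"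
    using orlicz_space_modular_le_one[OF N g] by blast
  have gm: "g \<in> borel_measurable M" using g unfolding orlicz_space_def by blast
  have pointwise: "\<Phi> (1 / (2 * k) * \<bar>g x - f x\<bar>) \<le> \<Phi> (\<bar>g x\<bar> / k) + \<Phi> (B / k)" for x
  proof -
    have "1 / (2 * k) * \<bar>g x - f x\<bar> \<le> (1 - 1 / 2) * (\<bar>g x\<bar> / k) + (1 / 2) * (B / k)"
      using f(2)[of x] \<open>k > 0\<close> by (simp add: field_simps)
    then have "\<Phi> (1 / (2 * k) * \<bar>g x - f x\<bar>) \<le> \<Phi> ((1 - 1 / 2) * (\<bar>g x\<bar> / k) + (1 / 2) * (B / k))"
      using \<open>k > 0\<close> by (intro N_function_mono[OF N]) auto
    also have "\<dots> \<le> (1 - 1 / 2) * \<Phi> (\<bar>g x\<bar> / k) + (1 / 2) * \<Phi> (B / k)"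
      using N convex_onD[of UNIV \<Phi> "1 / 2" "\<bar>g x\<bar> / k" "B / k"]
      unfolding N_function_def by auto
    also have "\<dots> \<le> \<Phi> (\<bar>g x\<bar> / k) + \<Phi> (B / k)"
      using N_function_nonneg[OF N] by (simp add: add_mono)
    finally show ?thesis .
  qed
  have "(\<integral>\<^sup>+x. ennreal (\<Phi> (1 / (2 * k) * \<bar>g x - f x\<bar>)) \<partial>M)
      \<le> (\<integral>\<^sup>+x. ennreal (\<Phi> (\<bar>g x\<bar> / k)) + ennreal (\<Phi> (B / k)) \<partial>M)"
    using pointwise N_function_nonneg[OF N]
    by (intro nn_integral_mono) (simp add: ennreal_plus[symmetric] ennreal_leI del: ennreal_plus)
  also have "\<dots> = (\<integral>\<^sup>+x. ennreal (\<Phi> (\<bar>g x\<bar> / k)) \<partial>M) + ennreal (\<Phi> (B / k)) * emeasure M (space M)"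
    using gm borel_measurable_N_function[OF N] by (simp add: nn_integral_add)
  also have "\<dots> < \<infinity>"
    using modular M by (auto simp: ennreal_mult_less_top le_less_trans[OF modular])
  finally have "(\<integral>\<^sup>+x. ennreal (\<Phi> (1 / (2 * k) * \<bar>g x - f x\<bar>)) \<partial>M) < \<infinity>" .
  moreover have "1 / (2 * k) > 0" using \<open>k > 0\<close> by simp
  moreover have "(\<lambda>x. g x - f x) \<in> borel_measurable M" using gm f(1) by measurable
  ultimately show ?thesis unfolding orlicz_space_def by blast
qed

lemma Cc_bounded:
  assumes "Cc f"
  obtains B where "\<And>x. \<bar>f x\<bar> \<le> B"
proof -
  let ?K = "closure {x. f x \<noteq> 0}"
  have "bounded (f ` ?K)"
    using assms unfolding Cc_def
    by (auto intro: compact_imp_bounded compact_continuous_image continuous_on_subset)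
  then obtain B where B: "\<forall>x\<in>?K. \<bar>f x\<bar> \<le> B"
    by (auto simp: bounded_iff)
  have "\<bar>f x\<bar> \<le> max B 0" for x
    using B closure_subset[of "{x. f x \<noteq> 0}"] by (cases "f x = 0") force+
  then show ?thesis using that by blast
qed

lemma Cc_measurable_fibre_measure:
  assumes "sets (lam u) = sets borel" and "Cc f"
  shows "f \<in> borel_measurable (fibre_measure lam r u)"
proof -
  have "f \<in> borel_measurable (lam u)"
    using assms unfolding Cc_def
    by (simp add: measurable_cong_sets[OF assms(1) refl] borel_measurable_continuous_onI)
  then show ?thesis unfolding fibre_measure_def by (rule measurable_restrict_space1)
qed

lemma continuous_on_grp_r:
  assumes "top_groupoid G2 gm gi"
  shows "continuous_on UNIV (grp_r gm gi)"
proof -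
  have "groupoid G2 gm gi" and mult: "continuous_on G2 (\<lambda>(x, y). gm x y)"
    and inv: "continuous_on UNIV gi"
    using assms unfolding top_groupoid_def by auto
  then have "(x, gi x) \<in> G2" for x
    unfolding groupoid_def by (metis (no_types))
  then have "continuous_on UNIV (\<lambda>x. (\<lambda>(x, y). gm x y) (x, gi x))"
    by (intro continuous_on_compose2[OF mult] continuous_on_Pair continuous_on_id inv) auto
  then show ?thesis unfolding grp_r_def[abs_def] by simp
qed

lemma left_haar_system_fibreD:
  assumes "left_haar_system G2 gm gi lam" and "u \<in> unit_space gm gi"
  shows left_haar_system_sets: "sets (lam u) = sets borel"
    and left_haar_system_emeasure_compact_finite: "compact K \<Longrightarrow> emeasure (lam u) K < \<infinity>"
  using conjunct1[OF assms(1)[unfolded left_haar_system_def]] assms(2) by auto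

lemma left_haar_system_continuous_integral:
  assumes "left_haar_system G2 gm gi lam" and "Cc f"
  shows "continuous_on (unit_space gm gi) (\<lambda>u. \<integral>x. f x \<partial>lam u)"
  using conjunct1[OF conjunct2[OF assms(1)[unfolded left_haar_system_def]]] assms(2) by blast

lemma emeasure_fibre_measure_le:
  fixes gm :: "'g::t2_space \<Rightarrow> 'g \<Rightarrow> 'g"
  assumes tg: "top_groupoid G2 gm gi" and lh: "left_haar_system G2 gm gi lam"
    and u: "u \<in> unit_space gm gi"
  shows "emeasure (fibre_measure lam (grp_r gm gi) u) (space (fibre_measure lam (grp_r gm gi) u))
           \<le> emeasure (lam u) UNIV"
proof -
  have sets: "sets (lam u) = sets borel" by (rule left_haar_system_sets[OF lh u])
  then have space: "space (lam u) = UNIV" using sets_eq_imp_space_eq by fastforce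
  have "closed {x. grp_r gm gi x = u}"
    by (intro closed_Collect_eq continuous_on_grp_r[OF tg] continuous_on_const)
  then have fibre: "{x. grp_r gm gi x = u} \<in> sets (lam u)" using sets by simp
  have "emeasure (fibre_measure lam (grp_r gm gi) u) (space (fibre_measure lam (grp_r gm gi) u))
      = emeasure (lam u) {x. grp_r gm gi x = u}"
    using fibre space unfolding fibre_measure_def
    by (simp add: space_restrict_space emeasure_restrict_space)
  also have "\<dots> \<le> emeasure (lam u) UNIV"
    using space by (intro emeasure_mono) (auto simp: sets.top[of "lam u", unfolded space])
  finally show ?thesis .
qed

lemma compact_groupoid_haar_mass_bounded:
  fixes gm :: "'g::t2_space \<Rightarrow> 'g \<Rightarrow> 'g"
  assumes tg: "top_groupoid G2 gm gi" and lh: "left_haar_system G2 gm gi lam"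
    and compact: "compact (UNIV :: 'g set)"
  shows "(SUP u\<in>unit_space gm gi. emeasure (lam u) UNIV) < \<infinity>"
proof -
  have "Cc (\<lambda>_::'g. 1)" unfolding Cc_def using compact by simp
  then have "continuous_on (unit_space gm gi) (\<lambda>u. \<integral>x. (1::real) \<partial>lam u)"
    by (rule left_haar_system_continuous_integral[OF lh])
  moreover have "compact (unit_space gm gi)"
    unfolding unit_space_def by (rule compact_continuous_image[OF continuous_on_grp_r[OF tg] compact])
  ultimately have "compact ((\<lambda>u. \<integral>x. (1::real) \<partial>lam u) ` unit_space gm gi)"
    by (rule compact_continuous_image)
  then have "bounded ((\<lambda>u. \<integral>x. (1::real) \<partial>lam u) ` unit_space gm gi)"
    by (rule compact_imp_bounded)
  then obtain B where B: "\<forall>y\<in>(\<lambda>u. \<integral>x. (1::real) \<partial>lam u) ` unit_space gm gi. norm y \<le> B"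
    unfolding bounded_iff by blast
  have "emeasure (lam u) UNIV \<le> ennreal B" if u: "u \<in> unit_space gm gi" for u
  proof -
    have space: "space (lam u) = UNIV"
      using sets_eq_imp_space_eq[OF left_haar_system_sets[OF lh u]] by simp
    have "emeasure (lam u) UNIV < \<infinity>"
      by (rule left_haar_system_emeasure_compact_finite[OF lh u compact])
    then have "emeasure (lam u) UNIV = ennreal (\<integral>x. (1::real) \<partial>lam u)"
      using space by (simp add: emeasure_eq_ennreal_measure)
    moreover have "\<bar>\<integral>x. (1::real) \<partial>lam u\<bar> \<le> B" using B u by auto
    ultimately show ?thesis by (simp add: ennreal_leI)
  qed
  then have "(SUP u\<in>unit_space gm gi. emeasure (lam u) UNIV) \<le> ennreal B"
    by (rule SUP_least)
  then show ?thesis unfolding infinity_ennreal_def by (rule le_less_trans[OF _ ennreal_less_top])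
qed

lemma loc_close_vanishing_mono:
  assumes "D > 0"
    and le: "\<And>u. u \<in> U \<Longrightarrow> N1 u (\<xi> u) \<le> D * N2 u (\<xi> u)"
    and le_diff: "\<And>u f. u \<in> U \<Longrightarrow> Cc f \<Longrightarrow>
                   N1 u (\<lambda>x. \<xi> u x - f x) \<le> D * N2 u (\<lambda>x. \<xi> u x - f x)"
    and close: "loc_close_vanishing N2 U \<xi>"
  shows "loc_close_vanishing N1 U \<xi>"
  unfolding loc_close_vanishing_def
proof (intro conjI ballI allI impI)
  fix u0 and \<epsilon> :: real assume "u0 \<in> U" "\<epsilon> > 0"
  then have "\<epsilon> / D > 0" using \<open>D > 0\<close> by simp
  then obtain f V where "Cc f" "open V" "u0 \<in> V"
    and near: "\<forall>v\<in>V \<inter> U. N2 v (\<lambda>x. \<xi> v x - f x) < \<epsilon> / D"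
    using conjunct1[OF close[unfolded loc_close_vanishing_def]] \<open>u0 \<in> U\<close> by blast
  have "N1 v (\<lambda>x. \<xi> v x - f x) < \<epsilon>" if "v \<in> V \<inter> U" for v
  proof -
    have "N1 v (\<lambda>x. \<xi> v x - f x) \<le> D * N2 v (\<lambda>x. \<xi> v x - f x)"
      using le_diff \<open>Cc f\<close> that by blast
    also have "\<dots> < D * (\<epsilon> / D)"
      using near that \<open>D > 0\<close> by (intro mult_strict_left_mono) auto
    finally show ?thesis using \<open>D > 0\<close> by simp
  qed
  then show "\<exists>f V. Cc f \<and> open V \<and> u0 \<in> V \<and> (\<forall>v\<in>V \<inter> U. N1 v (\<lambda>x. \<xi> v x - f x) < \<epsilon>)"
    using \<open>Cc f\<close> \<open>open V\<close> \<open>u0 \<in> V\<close> by blast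
next
  fix \<epsilon> :: real assume "\<epsilon> > 0"
  then have "\<epsilon> / D > 0" using \<open>D > 0\<close> by simp
  then obtain K where "compact K" "K \<subseteq> U" and small: "\<forall>u\<in>U - K. N2 u (\<xi> u) < \<epsilon> / D"
    using conjunct2[OF close[unfolded loc_close_vanishing_def]] by blast
  have "N1 u (\<xi> u) < \<epsilon>" if "u \<in> U - K" for u
  proof -
    have "N1 u (\<xi> u) \<le> D * N2 u (\<xi> u)" using le that by blast
    also have "\<dots> < D * (\<epsilon> / D)"
      using small that \<open>D > 0\<close> by (intro mult_strict_left_mono) auto
    finally show ?thesis using \<open>D > 0\<close> by simp
  qed
  then show "\<exists>K. compact K \<and> K \<subseteq> U \<and> (\<forall>u\<in>U - K. N1 u (\<xi> u) < \<epsilon>)"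
    using \<open>compact K\<close> \<open>K \<subseteq> U\<close> by blast
qed

lemma fibre_measure_mass_bounded:
  fixes gm :: "'g::t2_space \<Rightarrow> 'g \<Rightarrow> 'g"
  assumes tg: "top_groupoid G2 gm gi" and lh: "left_haar_system G2 gm gi lam"
    and mass: "(SUP u\<in>unit_space gm gi. emeasure (lam u) UNIV) < \<infinity>"
  obtains C where "C \<ge> 0" "\<And>u. u \<in> unit_space gm gi \<Longrightarrow>
    emeasure (fibre_measure lam (grp_r gm gi) u) (space (fibre_measure lam (grp_r gm gi) u)) \<le> ennreal C"
proof
  let ?S = "SUP u\<in>unit_space gm gi. emeasure (lam u) UNIV"
  show "enn2real ?S \<ge> 0" by simp
  fix u assume u: "u \<in> unit_space gm gi"
  have "emeasure (fibre_measure lam (grp_r gm gi) u) (space (fibre_measure lam (grp_r gm gi) u))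
      \<le> emeasure (lam u) UNIV"
    by (rule emeasure_fibre_measure_le[OF tg lh u])
  also have "\<dots> \<le> ?S" using u by (rule SUP_upper)
  also have "\<dots> = ennreal (enn2real ?S)" using mass by simp
  finally show "emeasure (fibre_measure lam (grp_r gm gi) u) (space (fibre_measure lam (grp_r gm gi) u))
      \<le> ennreal (enn2real ?S)" .
qed

lemma fibre_L1_norm_le_gauge_norm:
  fixes gm :: "'g::t2_space \<Rightarrow> 'g \<Rightarrow> 'g"
  assumes N: "N_function \<Phi>" and tg: "top_groupoid G2 gm gi"
    and lh: "left_haar_system G2 gm gi lam"
    and mass: "(SUP u\<in>unit_space gm gi. emeasure (lam u) UNIV) < \<infinity>"
  obtains D where "D > 0" "\<And>u h. u \<in> unit_space gm gi \<Longrightarrow>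
      h \<in> orlicz_space \<Phi> (fibre_measure lam (grp_r gm gi) u) \<Longrightarrow>
      integrable (fibre_measure lam (grp_r gm gi) u) h \<and>
      L1_norm (fibre_measure lam (grp_r gm gi) u) h
        \<le> D * gauge_norm \<Phi> (fibre_measure lam (grp_r gm gi) u) h"
proof -
  obtain C where C: "C \<ge> 0" "\<And>u. u \<in> unit_space gm gi \<Longrightarrow>
    emeasure (fibre_measure lam (grp_r gm gi) u) (space (fibre_measure lam (grp_r gm gi) u)) \<le> ennreal C"
    using fibre_measure_mass_bounded[OF tg lh mass] by blast
  obtain b where b: "b \<ge> 0" "\<And>t. 0 \<le> t \<Longrightarrow> t \<le> \<Phi> t + b"
    using N_function_ge_linear[OF N] by blast
  show ?thesis
  proof
    show "1 + b * C > 0" using b C by (simp add: add_pos_nonneg)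
  qed (use L1_norm_le_gauge_norm[OF N b C(2) C(1)] in blast)
qed

lemma I0_Phi_subset_I1:
  fixes gm :: "'g::t2_space \<Rightarrow> 'g \<Rightarrow> 'g"
  assumes N: "N_function \<Phi>" and tg: "top_groupoid G2 gm gi"
    and lh: "left_haar_system G2 gm gi lam"
    and mass: "(SUP u\<in>unit_space gm gi. emeasure (lam u) UNIV) < \<infinity>"
  shows "I0_Phi \<Phi> gm gi lam \<subseteq> I1 gm gi lam"
proof
  let ?F = "fibre_measure lam (grp_r gm gi)"
  obtain D where "D > 0" and L1_le: "\<And>u h. u \<in> unit_space gm gi \<Longrightarrow> h \<in> orlicz_space \<Phi> (?F u) \<Longrightarrow>
      integrable (?F u) h \<and> L1_norm (?F u) h \<le> D * gauge_norm \<Phi> (?F u) h"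
    using fibre_L1_norm_le_gauge_norm[OF N tg lh mass] by blast
  fix \<xi> assume "\<xi> \<in> I0_Phi \<Phi> gm gi lam"
  then obtain B where orlicz: "\<And>u. u \<in> unit_space gm gi \<Longrightarrow> \<xi> u \<in> orlicz_space \<Phi> (?F u)"
    and B: "\<And>u. u \<in> unit_space gm gi \<Longrightarrow> gauge_norm \<Phi> (?F u) (\<xi> u) \<le> B"
    unfolding I0_Phi_def by blast
  have "L1_norm (?F u) (\<xi> u) \<le> D * B" if "u \<in> unit_space gm gi" for u
    using L1_le[OF that orlicz[OF that]] B[OF that] \<open>D > 0\<close>
    by (meson mult_left_mono less_imp_le order_trans)
  then show "\<xi> \<in> I1 gm gi lam"
    using L1_le orlicz unfolding I1_def by blast
qed

lemma E0_Phi_subset_E1: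
  fixes gm :: "'g::t2_space \<Rightarrow> 'g \<Rightarrow> 'g"
  assumes N: "N_function \<Phi>" and tg: "top_groupoid G2 gm gi"
    and lh: "left_haar_system G2 gm gi lam"
    and mass: "(SUP u\<in>unit_space gm gi. emeasure (lam u) UNIV) < \<infinity>"
  shows "E0_Phi \<Phi> gm gi lam \<subseteq> E1 gm gi lam"
proof
  let ?F = "fibre_measure lam (grp_r gm gi)"
  obtain D where "D > 0" and L1_le: "\<And>u h. u \<in> unit_space gm gi \<Longrightarrow> h \<in> orlicz_space \<Phi> (?F u) \<Longrightarrow>
      integrable (?F u) h \<and> L1_norm (?F u) h \<le> D * gauge_norm \<Phi> (?F u) h"
    using fibre_L1_norm_le_gauge_norm[OF N tg lh mass] by blast
  obtain C where C: "\<And>u. u \<in> unit_space gm gi \<Longrightarrow> emeasure (?F u) (space (?F u)) \<le> ennreal C"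
    using fibre_measure_mass_bounded[OF tg lh mass] by blast
  have finite: "emeasure (?F u) (space (?F u)) < \<infinity>" if "u \<in> unit_space gm gi" for u
    by (rule le_less_trans[OF C[OF that]]) simp
  fix \<xi> assume "\<xi> \<in> E0_Phi \<Phi> gm gi lam"
  then have I0: "\<xi> \<in> I0_Phi \<Phi> gm gi lam"
    and close: "loc_close_vanishing (\<lambda>u. gauge_norm \<Phi> (?F u)) (unit_space gm gi) \<xi>"
    unfolding E0_Phi_def by auto
  then have orlicz: "\<And>u. u \<in> unit_space gm gi \<Longrightarrow> \<xi> u \<in> orlicz_space \<Phi> (?F u)"
    unfolding I0_Phi_def by blast
  (* gauge_norm is an infimum that is junk on an empty set, so the gauge-norm closeness
     of \<xi> u to f says nothing until \<xi> u - f is known to be an Orlicz function. *)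
  have orlicz_diff: "(\<lambda>x. \<xi> u x - f x) \<in> orlicz_space \<Phi> (?F u)"
    if u: "u \<in> unit_space gm gi" and "Cc f" for u f
  proof -
    obtain B where "\<And>x. \<bar>f x\<bar> \<le> B" using Cc_bounded[OF \<open>Cc f\<close>] by blast
    then show ?thesis
      using orlicz_space_diff_bounded[OF N finite[OF u] orlicz[OF u]]
        Cc_measurable_fibre_measure[of lam u, OF left_haar_system_sets[OF lh u] \<open>Cc f\<close>] by blast
  qed
  have "loc_close_vanishing (\<lambda>u. L1_norm (?F u)) (unit_space gm gi) \<xi>"
  proof (rule loc_close_vanishing_mono[OF \<open>D > 0\<close> _ _ close])
    show "L1_norm (?F u) (\<xi> u) \<le> D * gauge_norm \<Phi> (?F u) (\<xi> u)"
      if "u \<in> unit_space gm gi" for u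
      using L1_le[OF that orlicz[OF that]] by blast
    show "L1_norm (?F u) (\<lambda>x. \<xi> u x - f x) \<le> D * gauge_norm \<Phi> (?F u) (\<lambda>x. \<xi> u x - f x)"
      if "u \<in> unit_space gm gi" and "Cc f" for u f
      using L1_le[OF that(1) orlicz_diff[OF that]] by blast
  qed
  then show "\<xi> \<in> E1 gm gi lam"
    using I0_Phi_subset_I1[OF N tg lh mass] I0 unfolding E1_def by blast
qed

theorem lemma3p11:
  fixes G2 :: "('g::{t2_space, second_countable_topology} \<times> 'g) set"
    and gm :: "'g \<Rightarrow> 'g \<Rightarrow> 'g" and gi :: "'g \<Rightarrow> 'g"
    and lam :: "'g \<Rightarrow> 'g measure"
    and \<Phi> \<Psi> :: "real \<Rightarrow> real"
  assumes "locally_compact_space (euclidean :: 'g topology)"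
    and "top_groupoid G2 gm gi"
    and "left_haar_system G2 gm gi lam"
    and "N_function \<Phi>" and "\<Psi> = complementary_fun \<Phi>" and "N_function \<Psi>"
    and "Delta2 (compact (UNIV :: 'g set)) \<Phi>"
  shows "((SUP u\<in>unit_space gm gi. emeasure (lam u) UNIV) < \<infinity> \<longrightarrow>
            I0_Phi \<Phi> gm gi lam \<subseteq> I1 gm gi lam \<and> E0_Phi \<Phi> gm gi lam \<subseteq> E1 gm gi lam)
       \<and> (compact (UNIV :: 'g set) \<longrightarrow>
            I0_Phi \<Phi> gm gi lam \<subseteq> I1 gm gi lam \<and> E0_Phi \<Phi> gm gi lam \<subseteq> E1 gm gi lam)"
  using I0_Phi_subset_I1[OF assms(4,2,3)] E0_Phi_subset_E1[OF assms(4,2,3)]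
    compact_groupoid_haar_mass_bounded[OF assms(2,3)]
  by blast

end
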